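(* Let $A$ be an eNTA (with any finite number of clocks) and let $\gamma=q_0\tau_1q_1\cdots\tau_nq_n$ be a reachable path of $A$. For each $1\le i\le n$, the set $T_i$ of times at which $\tau_i$ is taken, over all runs along $\gamma$, is one of the following: a single point $\{n\}$ with $n\in\mathbb N_0$, or an interval (open, closed or half-open) with end-points $m<n$, where $m\in\mathbb N_0$ and $n\in\mathbb N\cup\{\infty\}$. Consequently, the timestamp of the $i$-th event, namely $T_i\times\{a_i\}$ where $a_i$ is the action of $\tau_i$, is a labeled integral point or a labeled interval of this form.
   Context: **Automata.** An eNTA (non-deterministic timed automaton with silent transitions) is a tuple $A=(\mathcal{Q},q_0,\Sigma_\epsilon,\mathcal{C},\mathcal{T})$ with the following components. - $\mathcal{Q}$ is a finite set of locations and $q_0$ is the initial location. - $\Sigma$ is a finite set of observable actions, and $\Sigma_\epsilon=\Sigma\cup\{\epsilon\}$, where $\epsilon$ is silent. - $\mathcal{C}$ is a finite set of clocks. - $\mathcal{T}$ is a finite set of transitions $(q,a,g,\mathcal{C}_{rst},q')$ with $a\in\Sigma_\epsilon$, $\mathcal C_{rst}\subseteq\mathcal C$ the clocks reset, and guard $g$ a finite conjunction of constraints $c\sim n$ with $c\in\mathcal C$, $\sim\in\{<,\le,=,\ge,>\}$ and $n\in\mathbb N_0$. **Runs.** A run is a finite sequence $$(q_0,\mathbf 0)\xrightarrow{d_1}(q_0,\mathbf 0+d_1)\xrightarrow{\tau_1}(q_1,v_1)\xrightarrow{d_2}\cdots\xrightarrow{\tau_k}(q_k,v_k),$$ where $d_i\in\mathbb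 R_{\ge0}$, $\tau_i=(q_{i-1},a_i,g_i,\mathcal C_i,q_i)\in\mathcal T$, $v_0=\mathbf 0$, $v_{i-1}+d_i\models g_i$, and $v_i$ equals $v_{i-1}+d_i$ with the clocks in $\mathcal C_i$ set to $0$. The $i$-th transition is taken at time $t_i=d_1+\dots+d_i$. **Paths.** A path $\gamma=q_0\tau_1q_1\cdots\tau_nq_n$ is a sequence of transitions with $\tau_i$ going from $q_{i-1}$ to $q_i$. A run along $\gamma$ uses exactly the transitions $\tau_1,\dots,\tau_n$ in order, and $\gamma$ is reachable if such a run exists. *)

theory Defs
  imports Main "HOL-Library.Extended_Nat" Complex_Main
begin

datatype cmp = Lt | Le | Eq | Ge | Gt

text \<open>A clock constraint c ~ n, n a natural number; a guard is a finite conjunction (list).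
  Actions: None is the silent action epsilon, Some a an observable action.\<close>
type_synonym 'c constr = "'c \<times> cmp \<times> nat"
type_synonym ('q,'a,'c) transition = "'q \<times> 'a option \<times> 'c constr list \<times> 'c set \<times> 'q"

record ('q,'a,'c) enta =
  locs :: "'q set"
  init :: "'q"
  acts :: "'a set"
  clks :: "'c set"
  trans :: "('q,'a,'c) transition set"

definition src :: "('q,'a,'c) transition \<Rightarrow> 'q" where "src t = fst t"
definition act :: "('q,'a,'c) transition \<Rightarrow> 'a option" where "act t = fst (snd t)"
definition guard :: "('q,'a,'c) transition \<Rightarrow> 'c constr list" where "guard t = fst (snd (snd t))"
definition resets :: "('q,'a,'c) transition \<Rightarrow> 'c set" where "resets t = fst (snd (snd (snd t)))"
definition tgt :: "('q,'a,'c) transition \<Rightarrow> 'q" where "tgt t = snd (snd (snd (snd t)))"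

definition wf_enta :: "('q,'a,'c) enta \<Rightarrow> bool" where
  "wf_enta A \<longleftrightarrow> finite (locs A) \<and> init A \<in> locs A \<and> finite (acts A) \<and> finite (clks A)
     \<and> finite (trans A)
     \<and> (\<forall>t\<in>trans A. src t \<in> locs A \<and> tgt t \<in> locs A \<and> set_option (act t) \<subseteq> acts A
          \<and> (\<forall>(c,_,_)\<in>set (guard t). c \<in> clks A) \<and> resets t \<subseteq> clks A)"

fun sat_cmp :: "real \<Rightarrow> cmp \<Rightarrow> nat \<Rightarrow> bool" where
  "sat_cmp x Lt n = (x < real n)"
| "sat_cmp x Le n = (x \<le> real n)"
| "sat_cmp x Eq n = (x = real n)"
| "sat_cmp x Ge n = (x \<ge> real n)"
| "sat_cmp x Gt n = (x > real n)"

definition sat_guard :: "('c \<Rightarrow> real) \<Rightarrow> 'c constr list \<Rightarrow> bool" where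
  "sat_guard v g \<longleftrightarrow> (\<forall>(c,r,n)\<in>set g. sat_cmp (v c) r n)"

definition delay :: "('c \<Rightarrow> real) \<Rightarrow> real \<Rightarrow> ('c \<Rightarrow> real)" where
  "delay v d = (\<lambda>c. v c + d)"

definition reset :: "('c \<Rightarrow> real) \<Rightarrow> 'c set \<Rightarrow> ('c \<Rightarrow> real)" where
  "reset v R = (\<lambda>c. if c \<in> R then 0 else v c)"

fun ok_run :: "('c \<Rightarrow> real) \<Rightarrow> ('q,'a,'c) transition list \<Rightarrow> real list \<Rightarrow> bool" where
  "ok_run v [] [] = True"
| "ok_run v (t # ts) (d # ds) =
     (d \<ge> 0 \<and> sat_guard (delay v d) (guard t) \<and> ok_run (reset (delay v d) (resets t)) ts ds)"
| "ok_run v _ _ = False"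

definition is_path :: "('q,'a,'c) enta \<Rightarrow> ('q,'a,'c) transition list \<Rightarrow> bool" where
  "is_path A ts \<longleftrightarrow> set ts \<subseteq> trans A
     \<and> (ts \<noteq> [] \<longrightarrow> src (hd ts) = init A)
     \<and> (\<forall>i. Suc i < length ts \<longrightarrow> tgt (ts ! i) = src (ts ! Suc i))"

definition run_along :: "('q,'a,'c) enta \<Rightarrow> ('q,'a,'c) transition list \<Rightarrow> real list \<Rightarrow> bool" where
  "run_along A ts ds \<longleftrightarrow> ok_run (\<lambda>_. 0) ts ds"

definition reachable_path :: "('q,'a,'c) enta \<Rightarrow> ('q,'a,'c) transition list \<Rightarrow> bool" where
  "reachable_path A ts \<longleftrightarrow> is_path A ts \<and> (\<exists>ds. run_along A ts ds)"

definition taken_times :: "('q,'a,'c) enta \<Rightarrow> ('q,'a,'c) transition list \<Rightarrow> nat \<Rightarrow> real set" where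
  "taken_times A ts i = {sum_list (take i ds) | ds. run_along A ts ds}"

definition timestamp :: "('q,'a,'c) enta \<Rightarrow> ('q,'a,'c) transition list \<Rightarrow> nat \<Rightarrow> (real \<times> 'a option) set" where
  "timestamp A ts i = taken_times A ts i \<times> {act (ts ! (i - 1))}"

definition integral_set :: "real set \<Rightarrow> bool" where
  "integral_set S \<longleftrightarrow>
     (\<exists>n::nat. S = {real n})
   \<or> (\<exists>m n::nat. m < n \<and>
        (S = {real m .. real n} \<or> S = {real m <.. real n} \<or> S = {real m ..< real n} \<or> S = {real m <..< real n}))
   \<or> (\<exists>m::nat. S = {real m ..} \<or> S = {real m <..})"

end

theory Submission
  imports Defs
begin

text \<open>
  Runs along a fixed path form a convex set of delay vectors, because every clock constraint
  defines a convex set; hence each set \<open>T\<^sub>i\<close> is an interval. Moreover, a strictly increasing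
  map \<open>P\<close> of the time line that commutes with integer translations preserves every comparison of a
  difference of two time points with an integer, so retiming all events of a run by \<open>P\<close> gives
  another run. Taking \<open>P\<close> piecewise linear on each \<open>[k, k+1)\<close> shows that \<open>T\<^sub>i\<close> contains every open
  unit interval \<open>(k, k+1)\<close> that it meets. An interval of nonnegative reals with this property has
  natural endpoints.
\<close>

definition unit_interval_saturated :: "real set \<Rightarrow> bool" where
  "unit_interval_saturated S \<longleftrightarrow>
     (\<forall>k::int. S \<inter> {of_int k <..< of_int k + 1} \<noteq> {} \<longrightarrow> {of_int k <..< of_int k + 1} \<subseteq> S)"

lemma Inf_in_Ints_if_unit_interval_saturated:
  fixes S :: "real set"
  assumes "S \<noteq> {}" "bdd_below S" "unit_interval_saturated S"
  shows "Inf S \<in> \<int>"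
proof (rule ccontr)
  define k where "k = \<lfloor>Inf S\<rfloor>"
  assume "Inf S \<notin> \<int>"
  then have k: "of_int k < Inf S" "Inf S < of_int k + 1"
    unfolding k_def by (metis Ints_of_int of_int_floor_le order_le_less, linarith)
  obtain x where x: "x \<in> S" "x < of_int k + 1"
    using cInf_lessD[OF assms(1) k(2)] by blast
  have "Inf S \<le> x" using cInf_lower[OF x(1) assms(2)] .
  then have "{of_int k <..< of_int k + 1} \<subseteq> S"
    using assms(3) k x unfolding unit_interval_saturated_def by force
  then have "(of_int k + Inf S) / 2 \<in> S" using k by auto
  then have "Inf S \<le> (of_int k + Inf S) / 2" using cInf_lower[OF _ assms(2)] by blast
  with k show False by (simp add: field_simps)
qed

lemma Sup_in_Ints_if_unit_interval_saturated:
  fixes S :: "real set"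
  assumes "S \<noteq> {}" "bdd_above S" "unit_interval_saturated S"
  shows "Sup S \<in> \<int>"
proof (rule ccontr)
  define k where "k = \<lfloor>Sup S\<rfloor>"
  assume "Sup S \<notin> \<int>"
  then have k: "of_int k < Sup S" "Sup S < of_int k + 1"
    unfolding k_def by (metis Ints_of_int of_int_floor_le order_le_less, linarith)
  obtain x where x: "x \<in> S" "of_int k < x"
    using less_cSupD[OF assms(1) k(1)] by blast
  have "x \<le> Sup S" using cSup_upper[OF x(1) assms(2)] .
  then have "{of_int k <..< of_int k + 1} \<subseteq> S"
    using assms(3) k x unfolding unit_interval_saturated_def by force
  then have "(of_int k + 1 + Sup S) / 2 \<in> S" using k by auto
  then have "(of_int k + 1 + Sup S) / 2 \<le> Sup S" using cSup_upper[OF _ assms(2)] by blast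
  with k show False by (simp add: field_simps)
qed

lemma integral_set_if_between_Nats:
  fixes S :: "real set"
  assumes "m \<in> \<nat>" "M \<in> \<nat>" "S \<noteq> {}" "S \<subseteq> {m..M}" "{m<..<M} \<subseteq> S"
  shows "integral_set S"
proof -
  obtain a b :: nat where ab: "m = real a" "M = real b"
    using assms(1,2) by (auto elim!: Nats_cases)
  have "m \<le> M" using assms(3,4) by auto
  show ?thesis
  proof (cases "m = M")
    case True
    then have "S = {real a}" using assms(3,4) ab by auto
    then show ?thesis unfolding integral_set_def by blast
  next
    case False
    with \<open>m \<le> M\<close> have "m < M" by simp
    define E where "E = S \<inter> {m, M}"
    have "S = {m<..<M} \<union> E" unfolding E_def using assms(4,5) by auto
    moreover have "E = {m, M} \<or> E = {M} \<or> E = {m} \<or> E = {}" unfolding E_def by auto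
    ultimately have "S = {m..M} \<or> S = {m<..M} \<or> S = {m..<M} \<or> S = {m<..<M}"
      using \<open>m < M\<close> by auto
    moreover have "a < b" using \<open>m < M\<close> ab by simp
    ultimately show ?thesis unfolding integral_set_def ab by blast
  qed
qed

lemma integral_set_if_above_Nat:
  fixes S :: "real set"
  assumes "m \<in> \<nat>" "S \<subseteq> {m..}" "{m<..} \<subseteq> S"
  shows "integral_set S"
proof -
  obtain a :: nat where a: "m = real a"
    using assms(1) by (auto elim!: Nats_cases)
  define E where "E = S \<inter> {m}"
  have "S = {m<..} \<union> E" unfolding E_def using assms(2,3) by auto
  moreover have "E = {m} \<or> E = {}" unfolding E_def by auto
  ultimately have "S = {m..} \<or> S = {m<..}" by auto
  then show ?thesis unfolding integral_set_def a by blast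
qed

lemma integral_set_if_unit_interval_saturated:
  fixes S :: "real set"
  assumes "S \<noteq> {}" "S \<subseteq> {0..}"
    and convex: "\<And>x y z. x \<in> S \<Longrightarrow> y \<in> S \<Longrightarrow> x \<le> z \<Longrightarrow> z \<le> y \<Longrightarrow> z \<in> S"
    and saturated: "unit_interval_saturated S"
  shows "integral_set S"
proof -
  have below: "bdd_below S" using assms(2) by (auto intro!: bdd_belowI[of _ 0])
  have "0 \<le> Inf S" using cInf_greatest[OF assms(1)] assms(2) by auto
  then have inf: "Inf S \<in> \<nat>"
    using Inf_in_Ints_if_unit_interval_saturated[OF assms(1) below saturated] by (simp add: Nats_altdef2)
  have lower: "S \<subseteq> {Inf S..}" using cInf_lower[OF _ below] by auto
  have between: "z \<in> S" if "a \<in> S" "b \<in> S" "a < z" "z < b" for a b z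
    using convex[of a b z] that by simp
  show ?thesis
  proof (cases "bdd_above S")
    case True
    have "0 \<le> Sup S" using \<open>0 \<le> Inf S\<close> cInf_le_cSup[OF assms(1) True below] by simp
    then have sup: "Sup S \<in> \<nat>"
      using Sup_in_Ints_if_unit_interval_saturated[OF assms(1) True saturated] by (simp add: Nats_altdef2)
    have "S \<subseteq> {Inf S..Sup S}" using lower cSup_upper[OF _ True] by auto
    moreover have "{Inf S<..<Sup S} \<subseteq> S"
    proof
      fix z assume "z \<in> {Inf S<..<Sup S}"
      then obtain a b where "a \<in> S" "a < z" "b \<in> S" "z < b"
        using cInf_lessD[OF assms(1)] less_cSupD[OF assms(1)] by (meson greaterThanLessThan_iff)
      then show "z \<in> S" using between by blast
    qed
    ultimately show ?thesis using integral_set_if_between_Nats[OF inf sup assms(1)] by blast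
  next
    case False
    then have above: "\<exists>b\<in>S. z < b" for z by (meson bdd_above.I not_le_imp_less)
    have "{Inf S<..} \<subseteq> S"
    proof
      fix z assume "z \<in> {Inf S<..}"
      then obtain a b where "a \<in> S" "a < z" "b \<in> S" "z < b"
        using cInf_lessD[OF assms(1)] above by (meson greaterThan_iff)
      then show "z \<in> S" using between by blast
    qed
    then show ?thesis using integral_set_if_above_Nat[OF inf lower] by blast
  qed
qed

lemma ok_run_length: "ok_run v ts ds \<Longrightarrow> length ds = length ts"
  by (induction v ts ds rule: ok_run.induct) auto

lemma ok_run_nonneg: "ok_run v ts ds \<Longrightarrow> d \<in> set ds \<Longrightarrow> 0 \<le> d"
  by (induction v ts ds rule: ok_run.induct) auto

lemma sat_cmp_convex:
  fixes l :: real
  assumes "sat_cmp x r n" "sat_cmp y r n" "0 \<le> l" "l \<le> 1"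
  shows "sat_cmp (l * x + (1 - l) * y) r n"
  using assms convex_bound_lt[of x "real n" y l "1 - l"] convex_bound_le[of x "real n" y l "1 - l"]
    convex_bound_lt[of "-x" "-real n" "-y" l "1 - l"] convex_bound_le[of "-x" "-real n" "-y" l "1 - l"]
  by (cases r) (auto simp: algebra_simps)

lemma ok_run_convex:
  fixes l :: real
  assumes "0 \<le> l" "l \<le> 1"
  shows "ok_run v ts ds \<Longrightarrow> ok_run v' ts ds' \<Longrightarrow>
    ok_run (\<lambda>c. l * v c + (1 - l) * v' c) ts (map2 (\<lambda>d d'. l * d + (1 - l) * d') ds ds')"
proof (induction ts arbitrary: v v' ds ds')
  case Nil
  then show ?case by (cases ds; cases ds') auto
next
  case (Cons t ts)
  obtain d e where ds: "ds = d # e" using Cons.prems(1) by (cases ds) auto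
  obtain d' e' where ds': "ds' = d' # e'" using Cons.prems(2) by (cases ds') auto
  let ?w = "\<lambda>c. l * v c + (1 - l) * v' c"
  have run: "d \<ge> 0" "sat_guard (delay v d) (guard t)" "ok_run (reset (delay v d) (resets t)) ts e"
    using Cons.prems(1) ds by auto
  have run': "d' \<ge> 0" "sat_guard (delay v' d') (guard t)" "ok_run (reset (delay v' d') (resets t)) ts e'"
    using Cons.prems(2) ds' by auto
  have "sat_guard (delay ?w (l * d + (1 - l) * d')) (guard t)"
    unfolding sat_guard_def
  proof clarify
    fix c r n assume "(c, r, n) \<in> set (guard t)"
    then have "sat_cmp (delay v d c) r n" "sat_cmp (delay v' d' c) r n"
      using run(2) run'(2) unfolding sat_guard_def by auto
    from sat_cmp_convex[OF this assms]
    show "sat_cmp (delay ?w (l * d + (1 - l) * d') c) r n"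
      by (simp add: delay_def algebra_simps)
  qed
  moreover have "reset (delay ?w (l * d + (1 - l) * d')) (resets t)
      = (\<lambda>c. l * reset (delay v d) (resets t) c + (1 - l) * reset (delay v' d') (resets t) c)"
    by (auto simp: reset_def delay_def algebra_simps)
  moreover have "l * d + (1 - l) * d' \<ge> 0" using run(1) run'(1) assms by simp
  ultimately show ?case using Cons.IH[OF run(3) run'(3)] ds ds' by simp
qed

lemma sum_list_take_map2_linear:
  fixes l m :: "'a::comm_semiring_0"
  assumes "length xs = length ys"
  shows "sum_list (take i (map2 (\<lambda>x y. l * x + m * y) xs ys))
    = l * sum_list (take i xs) + m * sum_list (take i ys)"
  using assms
proof (induction xs arbitrary: ys i)
  case (Cons x xs)
  then obtain y ys' where "ys = y # ys'" by (cases ys) auto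
  with Cons show ?case by (cases i) (auto simp: algebra_simps)
qed simp

lemma taken_times_order_convex:
  assumes "x \<in> taken_times A ts i" "y \<in> taken_times A ts i" "x \<le> z" "z \<le> y"
  shows "z \<in> taken_times A ts i"
proof (cases "x = y")
  case True
  then show ?thesis using assms by simp
next
  case False
  obtain ds where ds: "x = sum_list (take i ds)" "ok_run (\<lambda>_. 0) ts ds"
    using assms(1) unfolding taken_times_def run_along_def by blast
  obtain ds' where ds': "y = sum_list (take i ds')" "ok_run (\<lambda>_. 0) ts ds'"
    using assms(2) unfolding taken_times_def run_along_def by blast
  define l where "l = (y - z) / (y - x)"
  have "x < y" using False assms(3,4) by simp
  then have l: "0 \<le> l" "l \<le> 1" "z = l * x + (1 - l) * y"
    unfolding l_def using assms(3,4) by (simp_all add: divide_simps) (simp add: algebra_simps)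
  have "ok_run (\<lambda>_. 0) ts (map2 (\<lambda>d d'. l * d + (1 - l) * d') ds ds')"
    using ok_run_convex[OF l(1,2) ds(2) ds'(2)] by simp
  moreover have "sum_list (take i (map2 (\<lambda>d d'. l * d + (1 - l) * d') ds ds')) = z"
    using sum_list_take_map2_linear[where l = l and m = "1 - l" and xs = ds and ys = ds' and i = i]
      ok_run_length[OF ds(2)] ok_run_length[OF ds'(2)] ds(1) ds'(1) l(3) by simp
  ultimately show ?thesis unfolding taken_times_def run_along_def by blast
qed

lemma sat_cmp_diff_iff_strict_mono:
  fixes P :: "real \<Rightarrow> real"
  assumes "strict_mono P" "\<And>x k. P (x + real k) = P x + real k"
  shows "sat_cmp (P x - P y) r n \<longleftrightarrow> sat_cmp (x - y) r n"
proof -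
  have "P x < P (y + real n) \<longleftrightarrow> x < y + real n" "P x = P (y + real n) \<longleftrightarrow> x = y + real n"
    "P (y + real n) < P x \<longleftrightarrow> y + real n < x"
    using strict_mono_less[OF assms(1)] strict_mono_eq[OF assms(1)] by blast+
  then show ?thesis using assms(2)[of y n] by (cases r) (auto simp: not_less[symmetric])
qed

text \<open>The delays of the run whose events happen at the times \<open>P t\<^sub>j\<close> instead of \<open>t\<^sub>j\<close>, where \<open>t\<close> is the
  time of the preceding event.\<close>
fun retime :: "(real \<Rightarrow> real) \<Rightarrow> real \<Rightarrow> real list \<Rightarrow> real list" where
  "retime P t [] = []"
| "retime P t (d # ds) = (P (t + d) - P t) # retime P (t + d) ds"

lemma sum_list_take_retime:
  "sum_list (take i (retime P t ds)) = P (t + sum_list (take i ds)) - P t"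
proof (induction ds arbitrary: t i)
  case (Cons d ds)
  then show ?case by (cases i) (auto simp: algebra_simps)
qed simp

text \<open>A valuation is written \<open>\<lambda>c. t - r c\<close>, with \<open>t\<close> the current time and \<open>r c\<close> the time of the
  last reset of \<open>c\<close>.\<close>
lemma ok_run_retime:
  fixes P :: "real \<Rightarrow> real"
  assumes mono: "strict_mono P" and shift: "\<And>x k. P (x + real k) = P x + real k"
  shows "ok_run (\<lambda>c. t - r c) ts ds \<Longrightarrow> ok_run (\<lambda>c. P t - P (r c)) ts (retime P t ds)"
proof (induction ts arbitrary: t r ds)
  case Nil
  then show ?case by (cases ds) auto
next
  case (Cons tr ts)
  obtain d e where ds: "ds = d # e" using Cons.prems by (cases ds) auto
  define r' where "r' c = (if c \<in> resets tr then t + d else r c)" for c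
  have "reset (delay (\<lambda>c. t - r c) d) (resets tr) = (\<lambda>c. t + d - r' c)"
    by (auto simp: reset_def delay_def r'_def)
  then have run: "0 \<le> d" "sat_guard (\<lambda>c. t + d - r c) (guard tr)"
      "ok_run (\<lambda>c. t + d - r' c) ts e"
    using Cons.prems ds by (auto simp: delay_def algebra_simps)
  have "P t \<le> P (t + d)" using run(1) strict_mono_less_eq[OF mono] by simp
  moreover have "sat_guard (\<lambda>c. P (t + d) - P (r c)) (guard tr)"
    using run(2) sat_cmp_diff_iff_strict_mono[OF mono shift] unfolding sat_guard_def by auto
  moreover have "reset (delay (\<lambda>c. P t - P (r c)) (P (t + d) - P t)) (resets tr)
      = (\<lambda>c. P (t + d) - P (r' c))"
    by (auto simp: reset_def delay_def r'_def)
  ultimately show ?case using Cons.IH[OF run(3)] ds by (simp add: delay_def)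
qed

text \<open>\<open>stretch f f'\<close> is the piecewise linear bijection of \<open>[0, 1]\<close> sending \<open>f\<close> to \<open>f'\<close>;
  \<open>unit_retiming f f'\<close> applies it on every unit interval \<open>[k, k + 1)\<close>.\<close>
definition stretch :: "real \<Rightarrow> real \<Rightarrow> real \<Rightarrow> real" where
  "stretch f f' u = (if u \<le> f then u * (f' / f) else f' + (u - f) * ((1 - f') / (1 - f)))"

definition unit_retiming :: "real \<Rightarrow> real \<Rightarrow> real \<Rightarrow> real" where
  "unit_retiming f f' x = of_int \<lfloor>x\<rfloor> + stretch f f' (frac x)"

context
  fixes f f' :: real
  assumes f: "0 < f" "f < 1" and f': "0 < f'" "f' < 1"
begin

lemma strict_mono_stretch: "strict_mono (stretch f f')"
proof (rule strict_monoI)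
  fix u w :: real
  assume "u < w"
  have "u * (f' / f) < w * (f' / f)" "(u - f) * ((1 - f') / (1 - f)) < (w - f) * ((1 - f') / (1 - f))"
    using \<open>u < w\<close> f f' by (simp_all add: divide_simps mult_strict_right_mono)
  moreover have "u \<le> f \<Longrightarrow> u * (f' / f) \<le> f'" using f f' by (simp add: divide_simps)
  moreover have "f < w \<Longrightarrow> 0 < (w - f) * ((1 - f') / (1 - f))" using f f' by simp
  ultimately show "stretch f f' u < stretch f f' w"
    using \<open>u < w\<close> unfolding stretch_def by auto
qed

lemma stretch_0: "stretch f f' 0 = 0"
  using f by (simp add: stretch_def)

lemma stretch_f: "stretch f f' f = f'"
  using f by (simp add: stretch_def)

lemma stretch_less_1: "u < 1 \<Longrightarrow> stretch f f' u < 1"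
  using strict_monoD[OF strict_mono_stretch, of u 1] f by (simp add: stretch_def)

lemma stretch_nonneg: "0 \<le> u \<Longrightarrow> 0 \<le> stretch f f' u"
  using strict_mono_less_eq[OF strict_mono_stretch, of 0 u] by (simp add: stretch_0)

lemma strict_mono_unit_retiming: "strict_mono (unit_retiming f f')"
proof (rule strict_monoI)
  fix x y :: real
  assume "x < y"
  show "unit_retiming f f' x < unit_retiming f f' y"
  proof (cases "\<lfloor>x\<rfloor> = \<lfloor>y\<rfloor>")
    case True
    then have "frac x < frac y" using \<open>x < y\<close> by (simp add: frac_def)
    with True show ?thesis
      using strict_monoD[OF strict_mono_stretch] by (simp add: unit_retiming_def)
  next
    case False
    then have "of_int \<lfloor>x\<rfloor> + 1 \<le> (of_int \<lfloor>y\<rfloor> :: real)"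
      using floor_mono[of x y] \<open>x < y\<close> by linarith
    with stretch_less_1[OF frac_lt_1, of x] stretch_nonneg[OF frac_ge_0, of y] show ?thesis
      by (simp add: unit_retiming_def)
  qed
qed

lemma unit_retiming_add_of_nat: "unit_retiming f f' (x + real k) = unit_retiming f f' x + real k"
  using frac_add_of_int_right[of x "int k"] by (simp add: unit_retiming_def)

lemma unit_retiming_0: "unit_retiming f f' 0 = 0"
  by (simp add: unit_retiming_def stretch_0)

lemma unit_retiming_of_int_add: "unit_retiming f f' (of_int k + f) = of_int k + f'"
proof -
  have "\<lfloor>of_int k + f\<rfloor> = k" using f by linarith
  then show ?thesis using f by (simp add: unit_retiming_def frac_def stretch_f)
qed

end

lemma taken_times_nonempty: "reachable_path A ts \<Longrightarrow> taken_times A ts i \<noteq> {}"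
  unfolding reachable_path_def taken_times_def by blast

lemma taken_times_nonneg: "x \<in> taken_times A ts i \<Longrightarrow> 0 \<le> x"
  unfolding taken_times_def run_along_def
  by (auto intro!: sum_list_nonneg dest: ok_run_nonneg in_set_takeD)

lemma taken_times_unit_interval_saturated: "unit_interval_saturated (taken_times A ts i)"
  unfolding unit_interval_saturated_def
proof (intro allI impI subsetI)
  fix k :: int and y :: real
  assume "taken_times A ts i \<inter> {of_int k <..< of_int k + 1} \<noteq> {}"
    and y: "y \<in> {of_int k <..< of_int k + 1}"
  then obtain x where x: "x \<in> taken_times A ts i" "of_int k < x" "x < of_int k + 1"
    by auto
  then obtain ds where ds: "x = sum_list (take i ds)" "ok_run (\<lambda>_. 0) ts ds"
    unfolding taken_times_def run_along_def by blast
  have f: "0 < x - of_int k" "x - of_int k < 1" "0 < y - of_int k" "y - of_int k < 1"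
    using x(2,3) y by auto
  define P where "P = unit_retiming (x - of_int k) (y - of_int k)"
  have P0: "P 0 = 0" unfolding P_def using unit_retiming_0[OF f] .
  have "ok_run (\<lambda>_. 0) ts (retime P 0 ds)"
    using ok_run_retime[OF strict_mono_unit_retiming[OF f] unit_retiming_add_of_nat[OF f], of 0 "\<lambda>_. 0"]
      ds(2) P0 unfolding P_def by simp
  moreover have "sum_list (take i (retime P 0 ds)) = y"
    using sum_list_take_retime[of i P 0 ds] unit_retiming_of_int_add[OF f, of k] ds(1) P0
    unfolding P_def by simp
  ultimately show "y \<in> taken_times A ts i"
    unfolding taken_times_def run_along_def by blast
qed

theorem proposition2:
  fixes A :: "('q,'a,'c) enta" and ts :: "('q,'a,'c) transition list" and i :: nat
  assumes "wf_enta A"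
    and "reachable_path A ts"
    and "1 \<le> i" and "i \<le> length ts"
  shows "integral_set (taken_times A ts i)
       \<and> (\<exists>S. integral_set S \<and> timestamp A ts i = S \<times> {act (ts ! (i - 1))})"
proof -
  have "integral_set (taken_times A ts i)"
  proof (rule integral_set_if_unit_interval_saturated)
    show "taken_times A ts i \<noteq> {}" using assms(2) by (rule taken_times_nonempty)
    show "taken_times A ts i \<subseteq> {0..}" using taken_times_nonneg by auto
  qed (auto intro: taken_times_order_convex taken_times_unit_interval_saturated)
  then show ?thesis unfolding timestamp_def by blast
qed

end
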